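(* Let $A=(a_{ij})$ be a real $n\times n$ matrix with nonnegative entries, $\mathbf 1=(1,\ldots,1)^{\mathrm T}$, $L=\operatorname{diag}(A\mathbf 1)-A$, and let $P=I-\tau L$ with $0<\tau\le\bigl(\max_i\sum_{j\neq i}a_{ij}\bigr)^{-1}$ (so that $P$ is row stochastic). Let $S$ be the orthogonal projection of $\mathbb R^n$ onto $\mathcal R(L)\oplus\operatorname{span}(\mathbf 1)$, and let $\widetilde P=PS$. Then for every initial vector $x(0)\in\mathbb R^n$, the process $x(k)=\widetilde P^{\,k}x(0)$ coincides with the process $x(k)=P^kSx(0)$, i.e., $\widetilde P^{\,k}x(0)=P^kSx(0)$ for all $k=1,2,\ldots$.
   Context: $\mathcal R(L)$ denotes the range of $L$; $I$ is the $n\times n$ identity matrix. The process $x(k)=P^kSx(0)$ is the orthogonal projection method applied to DeGroot's iterative pooling process $y(k)=P^ky(0)$. *)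

theory Defs
  imports "HOL-Analysis.Analysis"
begin

primrec mpow :: "real^'n^'n \<Rightarrow> nat \<Rightarrow> real^'n^'n" where
  "mpow M 0 = mat 1"
| "mpow M (Suc k) = M ** mpow M k"

definition ones :: "real^'n" where "ones = (\<chi> i. 1)"

definition diag_mat :: "real^'n \<Rightarrow> real^'n^'n" where
  "diag_mat v = (\<chi> i j. if i = j then v $ i else 0)"

definition laplacian :: "real^'n^'n \<Rightarrow> real^'n^'n" where
  "laplacian A = diag_mat (A *v ones) - A"

definition mrange :: "real^'n^'m \<Rightarrow> (real^'m) set" where
  "mrange M = range (\<lambda>x. M *v x)"

definition is_orth_proj :: "real^'n^'n \<Rightarrow> (real^'n) set \<Rightarrow> bool" where
  "is_orth_proj S V \<longleftrightarrow> (\<forall>x. S *v x \<in> V \<and> (\<forall>v\<in>V. (x - S *v x) \<bullet> v = 0))"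

end

theory Submission
  imports Defs
begin

text \<open>The subspace \<open>V = \<R>(L) \<oplus> span {\<one>}\<close> is invariant under \<open>P = I - \<tau>L\<close>, because \<open>L\<close>
  maps everything into \<open>\<R>(L)\<close>; and \<open>S\<close> fixes \<open>V\<close> pointwise and maps into \<open>V\<close>. Hence after
  the first application of \<open>S\<close> every iterate stays in \<open>V\<close>, where all later factors \<open>S\<close>
  act as the identity.\<close>

lemma mpow_Suc_right: "mpow M (Suc k) = mpow M k ** M"
  by (induction k) (simp_all add: matrix_mul_lid matrix_mul_rid matrix_mul_assoc)

lemma mpow_mult_vector_invariant:
  assumes "\<And>v. v \<in> V \<Longrightarrow> M *v v \<in> V" and "v \<in> V"
  shows "mpow M k *v v \<in> V"
  using assms(2) by (induction k) (simp_all add: assms(1) matrix_vector_mul_assoc[symmetric])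

lemma subspace_set_plus:
  assumes "subspace U" and "subspace W"
  shows "subspace (U + W)"
proof -
  have "U + W = {x + y |x y. x \<in> U \<and> y \<in> W}"
    unfolding set_plus_def by blast
  then show ?thesis
    using subspace_sums[OF assms] by simp
qed

lemma subspace_mrange: "subspace (mrange M)"
  unfolding mrange_def
  using linear_subspace_image[OF matrix_vector_mul_linear subspace_UNIV] by simp

lemma is_orth_proj_into: "is_orth_proj S V \<Longrightarrow> S *v x \<in> V"
  unfolding is_orth_proj_def by blast

lemma is_orth_proj_fixes:
  assumes "is_orth_proj S V" and "subspace V" and "v \<in> V"
  shows "S *v v = v"
proof -
  have "v - S *v v \<in> V"
    using subspace_diff[OF assms(2,3) is_orth_proj_into[OF assms(1)]] .
  then have "(v - S *v v) \<bullet> (v - S *v v) = 0"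
    using assms(1) unfolding is_orth_proj_def by blast
  then show ?thesis by simp
qed

lemma mpow_mult_retraction:
  assumes into: "\<And>x. S *v x \<in> V"
    and fixes_V: "\<And>v. v \<in> V \<Longrightarrow> S *v v = v"
    and invariant: "\<And>v. v \<in> V \<Longrightarrow> M *v v \<in> V"
  shows "mpow (M ** S) (Suc k) *v x = mpow M (Suc k) *v (S *v x)"
proof -
  have on_V: "mpow (M ** S) k *v v = mpow M k *v v" if "v \<in> V" for k v
  proof (induction k)
    case (Suc k)
    have "mpow (M ** S) (Suc k) *v v = M *v (S *v (mpow M k *v v))"
      using Suc by (simp add: matrix_vector_mul_assoc[symmetric])
    also have "\<dots> = mpow M (Suc k) *v v"
      using fixes_V[OF mpow_mult_vector_invariant[OF invariant that]]
      by (simp add: matrix_vector_mul_assoc[symmetric])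
    finally show ?case .
  qed simp
  have "mpow (M ** S) (Suc k) *v x = mpow (M ** S) k *v (M *v (S *v x))"
    by (simp only: mpow_Suc_right) (simp add: matrix_vector_mul_assoc[symmetric])
  also have "\<dots> = mpow M (Suc k) *v (S *v x)"
    using on_V[OF invariant[OF into]]
    by (simp only: mpow_Suc_right) (simp add: matrix_vector_mul_assoc[symmetric])
  finally show ?thesis .
qed

lemma perturbed_identity_preserves_range_plus:
  assumes "subspace W" and "v \<in> mrange L + W"
  shows "(mat 1 - c *\<^sub>R L) *v v \<in> mrange L + W"
proof -
  have V: "subspace (mrange L + W)"
    by (rule subspace_set_plus[OF subspace_mrange assms(1)])
  have "L *v v + 0 \<in> mrange L + W"
    unfolding mrange_def by (intro set_plus_intro) (auto simp: subspace_0[OF assms(1)])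
  then have "c *\<^sub>R (L *v v) \<in> mrange L + W"
    using subspace_scale[OF V] by simp
  then show ?thesis
    using subspace_diff[OF V assms(2)]
    by (simp add: matrix_vector_mult_diff_rdistrib matrix_vector_mul_lid scaleR_matrix_vector_assoc)
qed

theorem theorem4:
  fixes A S :: "real^'n^'n" and \<tau> :: real
  assumes nonneg: "\<forall>i j. A $ i $ j \<ge> 0"
    and tau_pos: "0 < \<tau>"
    and tau_le: "\<tau> * (MAX i. \<Sum>j\<in>UNIV - {i}. A $ i $ j) \<le> 1"
    and S_proj: "is_orth_proj S (mrange (laplacian A) + span {ones})"
  shows "\<forall>x0 :: real^'n. \<forall>k\<ge>1.
           mpow ((mat 1 - \<tau> *\<^sub>R laplacian A) ** S) k *v x0
         = mpow (mat 1 - \<tau> *\<^sub>R laplacian A) k *v (S *v x0)"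
proof (intro allI impI)
  fix x0 :: "real^'n" and k :: nat
  assume "k \<ge> 1"
  then obtain m where k: "k = Suc m"
    by (cases k) auto
  have V: "subspace (mrange (laplacian A) + span {ones})"
    by (rule subspace_set_plus[OF subspace_mrange subspace_span])
  show "mpow ((mat 1 - \<tau> *\<^sub>R laplacian A) ** S) k *v x0
      = mpow (mat 1 - \<tau> *\<^sub>R laplacian A) k *v (S *v x0)"
    unfolding k
    by (rule mpow_mult_retraction[OF is_orth_proj_into[OF S_proj] is_orth_proj_fixes[OF S_proj V]
          perturbed_identity_preserves_range_plus[OF subspace_span]])
qed

end
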